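(* Let $Q$ be a set and let $\{*_\alpha\}_{\alpha\in\Lambda}$ be a family of quandle operations on $Q$ that are pairwise distributive with respect to each other, i.e. $(a*_\alpha b)*_\beta c=(a*_\beta c)*_\alpha(b*_\beta c)$ for all $\alpha,\beta\in\Lambda$ and $a,b,c\in Q$. Let $F$ be the free group on the symbols $*_\alpha$, $\alpha\in\Lambda$. For $w\in F$ written as a word $s_1\cdots s_k$ with each $s_i\in\{*_\alpha,*_\alpha^{-1}:\alpha\in\Lambda\}$, define $\star_w\colon Q\times Q\to Q$ by $$a\star_w b=(\cdots((a\,s_1\,b)\,s_2\,b)\cdots)\,s_k\,b,$$ where the letter $*_\alpha^{-1}$ acts as the right inverse operation $\bar*_\alpha$ of $*_\alpha$ (and the empty word gives $a\star_e b=a$). Then every $(Q,\star_w)$, $w\in F$, is a quandle, and the set $\{(Q,\star_w)\mid w\in F\}$ is closed under quandle multiplication.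
   Context: A quandle operation on $Q$ is a binary operation $*$ with $x*x=x$, unique right division, and $(x*y)*z=(x*z)*(y*z)$. The right inverse $\bar*$ of $*$ is defined by $a=c*b\iff c=a\,\bar*\,b$. The (quandle) multiplication of two groupoid structures $(Q,\circ)$ and $(Q,* )$ on the same set is $(Q,\circ)(Q,* )=(Q,\circ* )$, where $a\,(\circ* )\,b=(a\circ b)*b$. *)

theory Defs
  imports Main
begin

text \<open>A quandle operation on a carrier set Q (operations are functions on the
ambient type; only their behaviour on Q matters).\<close>
definition quandle_on :: "'a set \<Rightarrow> ('a \<Rightarrow> 'a \<Rightarrow> 'a) \<Rightarrow> bool" where
  "quandle_on Q op \<longleftrightarrow>
     (\<forall>a\<in>Q. \<forall>b\<in>Q. op a b \<in> Q) \<and>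
     (\<forall>a\<in>Q. op a a = a) \<and>
     (\<forall>a\<in>Q. \<forall>b\<in>Q. \<exists>!c. c \<in> Q \<and> op c b = a) \<and>
     (\<forall>a\<in>Q. \<forall>b\<in>Q. \<forall>c\<in>Q. op (op a b) c = op (op a c) (op b c))"

definition rdiv :: "'a set \<Rightarrow> ('a \<Rightarrow> 'a \<Rightarrow> 'a) \<Rightarrow> 'a \<Rightarrow> 'a \<Rightarrow> 'a" where
  "rdiv Q op a b = (THE c. c \<in> Q \<and> op c b = a)"

definition pairwise_distributive ::
  "'a set \<Rightarrow> 'l set \<Rightarrow> ('l \<Rightarrow> 'a \<Rightarrow> 'a \<Rightarrow> 'a) \<Rightarrow> bool" where
  "pairwise_distributive Q \<Lambda> ops \<longleftrightarrow>
     (\<forall>al\<in>\<Lambda>. \<forall>be\<in>\<Lambda>. \<forall>a\<in>Q. \<forall>b\<in>Q. \<forall>c\<in>Q.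
        ops be (ops al a b) c = ops al (ops be a c) (ops be b c))"

text \<open>Words over the letters *_al (encoded (al, True)) and *_al^-1
(encoded (al, False)). Elements of the free group F on {*_al | al in Lambda} are
represented by reduced words over Lambda.\<close>
type_synonym 'l letter = "'l \<times> bool"

definition reduced_word :: "'l letter list \<Rightarrow> bool" where
  "reduced_word w \<longleftrightarrow>
     (\<forall>i. Suc i < length w \<longrightarrow>
        \<not> (fst (w ! i) = fst (w ! Suc i) \<and> snd (w ! i) \<noteq> snd (w ! Suc i)))"

definition free_group_elems :: "'l set \<Rightarrow> 'l letter list set" where
  "free_group_elems \<Lambda> = {w. set (map fst w) \<subseteq> \<Lambda> \<and> reduced_word w}"

definition star_w ::
  "'a set \<Rightarrow> ('l \<Rightarrow> 'a \<Rightarrow> 'a \<Rightarrow> 'a) \<Rightarrow> 'l letter list \<Rightarrow> 'a \<Rightarrow> 'a \<Rightarrow> 'a" where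
  "star_w Q ops w a b =
     foldl (\<lambda>x (al, s). if s then ops al x b else rdiv Q (ops al) x b) a w"

definition qmult :: "('a \<Rightarrow> 'a \<Rightarrow> 'a) \<Rightarrow> ('a \<Rightarrow> 'a \<Rightarrow> 'a) \<Rightarrow> 'a \<Rightarrow> 'a \<Rightarrow> 'a" where
  "qmult f g a b = g (f a b) b"

end

theory Submission
  imports Defs
begin

text \<open>Say that h distributes over k when every right translation x \<mapsto> h x c is a
homomorphism for k. Right division by a quandle operation is again a quandle operation,
and distributivity survives passing to right inverses and to quandle multiplication in
either argument. Hence the operations of the letters and of their inverses form a pairwise
distributive family of quandles, and so do all finite products of them; these products are
exactly the operations \<star>w. Finally the product of \<star>u and \<star>v is \<star>(uv), and cancelling a
letter against its inverse does not change \<star>w on Q, so the product is given by a reduced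
word.\<close>

definition op_closed_on :: "'a set \<Rightarrow> ('a \<Rightarrow> 'a \<Rightarrow> 'a) \<Rightarrow> bool" where
  "op_closed_on Q f \<longleftrightarrow> (\<forall>a\<in>Q. \<forall>b\<in>Q. f a b \<in> Q)"

definition distributes_over :: "'a set \<Rightarrow> ('a \<Rightarrow> 'a \<Rightarrow> 'a) \<Rightarrow> ('a \<Rightarrow> 'a \<Rightarrow> 'a) \<Rightarrow> bool" where
  "distributes_over Q h k \<longleftrightarrow> (\<forall>a\<in>Q. \<forall>b\<in>Q. \<forall>c\<in>Q. h (k a b) c = k (h a c) (h b c))"

definition distributive_quandles :: "'a set \<Rightarrow> ('a \<Rightarrow> 'a \<Rightarrow> 'a) set \<Rightarrow> bool" where
  "distributive_quandles Q F \<longleftrightarrow>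
     (\<forall>f\<in>F. quandle_on Q f) \<and> (\<forall>h\<in>F. \<forall>k\<in>F. distributes_over Q h k)"

definition qmult_list :: "('a \<Rightarrow> 'a \<Rightarrow> 'a) list \<Rightarrow> 'a \<Rightarrow> 'a \<Rightarrow> 'a" where
  "qmult_list fs = foldl qmult (\<lambda>a b. a) fs"

definition letter_op :: "'a set \<Rightarrow> ('l \<Rightarrow> 'a \<Rightarrow> 'a \<Rightarrow> 'a) \<Rightarrow> 'l letter \<Rightarrow> 'a \<Rightarrow> 'a \<Rightarrow> 'a" where
  "letter_op Q ops l = (if snd l then ops (fst l) else rdiv Q (ops (fst l)))"

lemma distributes_overD:
  "distributes_over Q h k \<Longrightarrow> a \<in> Q \<Longrightarrow> b \<in> Q \<Longrightarrow> c \<in> Q \<Longrightarrow>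
    h (k a b) c = k (h a c) (h b c)"
  by (simp add: distributes_over_def)

lemma op_closed_onD: "op_closed_on Q f \<Longrightarrow> a \<in> Q \<Longrightarrow> b \<in> Q \<Longrightarrow> f a b \<in> Q"
  by (simp add: op_closed_on_def)

lemma quandle_on_iff:
  "quandle_on Q f \<longleftrightarrow>
     op_closed_on Q f \<and> (\<forall>a\<in>Q. f a a = a) \<and> (\<forall>a\<in>Q. \<forall>b\<in>Q. \<exists>!c. c \<in> Q \<and> f c b = a) \<and>
     distributes_over Q f f"
  by (simp add: quandle_on_def op_closed_on_def distributes_over_def)

subsection \<open>Right division in a quandle\<close>

context
  fixes Q :: "'a set" and f :: "'a \<Rightarrow> 'a \<Rightarrow> 'a"
  assumes quandle: "quandle_on Q f"
begin

lemma quandle_on_closed: "op_closed_on Q f"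
  using quandle by (simp add: quandle_on_iff)

lemma quandle_on_idem: "a \<in> Q \<Longrightarrow> f a a = a"
  using quandle by (simp add: quandle_on_def)

lemma quandle_on_self_distributes: "distributes_over Q f f"
  using quandle by (simp add: quandle_on_iff)

lemma rdiv_closed_and_cancel:
  assumes "a \<in> Q" "b \<in> Q"
  shows "rdiv Q f a b \<in> Q \<and> f (rdiv Q f a b) b = a"
proof -
  have "\<exists>!c. c \<in> Q \<and> f c b = a"
    using quandle assms by (simp add: quandle_on_def)
  from theI'[OF this] show ?thesis
    by (simp add: rdiv_def)
qed

lemma rdiv_closed: "op_closed_on Q (rdiv Q f)"
  using rdiv_closed_and_cancel by (simp add: op_closed_on_def)

lemma op_rdiv_cancel: "a \<in> Q \<Longrightarrow> b \<in> Q \<Longrightarrow> f (rdiv Q f a b) b = a"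
  using rdiv_closed_and_cancel by blast

lemma rdiv_eqI:
  assumes "c \<in> Q" "b \<in> Q" "f c b = a"
  shows "rdiv Q f a b = c"
proof -
  have "a \<in> Q"
    using assms quandle_on_closed by (auto dest: op_closed_onD)
  then have "\<exists>!c. c \<in> Q \<and> f c b = a"
    using quandle assms(2) by (simp add: quandle_on_def)
  then show ?thesis
    using rdiv_closed_and_cancel[OF \<open>a \<in> Q\<close> assms(2)] assms by blast
qed

lemma rdiv_op_cancel: "a \<in> Q \<Longrightarrow> b \<in> Q \<Longrightarrow> rdiv Q f (f a b) b = a"
  using rdiv_eqI by blast

lemma distributes_over_rdiv:
  assumes "op_closed_on Q h" "distributes_over Q h f"
  shows "distributes_over Q h (rdiv Q f)"
  unfolding distributes_over_def
proof (intro ballI)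
  fix a b c assume abc: "a \<in> Q" "b \<in> Q" "c \<in> Q"
  define x where "x = rdiv Q f a b"
  have x: "x \<in> Q" "f x b = a"
    using rdiv_closed_and_cancel[OF abc(1,2)] by (simp_all add: x_def)
  have "f (h x c) (h b c) = h a c"
    using distributes_overD[OF assms(2) x(1) abc(2,3)] x(2) by simp
  then have "rdiv Q f (h a c) (h b c) = h x c"
    using assms(1) x(1) abc by (intro rdiv_eqI) (auto dest: op_closed_onD)
  then show "h (rdiv Q f a b) c = rdiv Q f (h a c) (h b c)"
    by (simp add: x_def)
qed

lemma rdiv_distributes_over:
  assumes "op_closed_on Q k" "distributes_over Q f k"
  shows "distributes_over Q (rdiv Q f) k"
  unfolding distributes_over_def
proof (intro ballI)
  fix a b c assume abc: "a \<in> Q" "b \<in> Q" "c \<in> Q"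
  define x y where "x = rdiv Q f a c" and "y = rdiv Q f b c"
  have xy: "x \<in> Q" "f x c = a" "y \<in> Q" "f y c = b"
    using rdiv_closed_and_cancel abc by (simp_all add: x_def y_def)
  have "f (k x y) c = k a b"
    using distributes_overD[OF assms(2) xy(1,3) abc(3)] xy by simp
  then have "rdiv Q f (k a b) c = k x y"
    using assms(1) xy abc by (intro rdiv_eqI) (auto dest: op_closed_onD)
  then show "rdiv Q f (k a b) c = k (rdiv Q f a c) (rdiv Q f b c)"
    by (simp add: x_def y_def)
qed

lemma quandle_on_rdiv: "quandle_on Q (rdiv Q f)"
  unfolding quandle_on_iff
proof (intro conjI ballI)
  show "op_closed_on Q (rdiv Q f)"
    by (rule rdiv_closed)
  show "rdiv Q f a a = a" if "a \<in> Q" for a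
    using that by (intro rdiv_eqI quandle_on_idem)
  show "\<exists>!c. c \<in> Q \<and> rdiv Q f c b = a" if "a \<in> Q" "b \<in> Q" for a b
  proof (rule ex1I[of _ "f a b"])
    show "f a b \<in> Q \<and> rdiv Q f (f a b) b = a"
      using that quandle_on_closed rdiv_op_cancel by (simp add: op_closed_onD)
    show "c = f a b" if "c \<in> Q \<and> rdiv Q f c b = a" for c
      using that op_rdiv_cancel \<open>b \<in> Q\<close> by auto
  qed
  show "distributes_over Q (rdiv Q f) (rdiv Q f)"
    using rdiv_closed quandle_on_closed quandle_on_self_distributes
    by (intro rdiv_distributes_over distributes_over_rdiv)
qed

end

subsection \<open>Quandle multiplication\<close>

lemma qmult_closed: "op_closed_on Q f \<Longrightarrow> op_closed_on Q g \<Longrightarrow> op_closed_on Q (qmult f g)"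
  by (simp add: op_closed_on_def qmult_def)

lemma distributes_over_qmult:
  assumes "op_closed_on Q f" "distributes_over Q h f" "distributes_over Q h g"
  shows "distributes_over Q h (qmult f g)"
  using assms by (simp add: distributes_over_def qmult_def op_closed_on_def)

lemma qmult_distributes_over:
  assumes "op_closed_on Q f" "distributes_over Q f k" "distributes_over Q g k"
  shows "distributes_over Q (qmult f g) k"
  using assms by (simp add: distributes_over_def qmult_def op_closed_on_def)

lemma quandle_on_qmult:
  assumes f: "quandle_on Q f" and g: "quandle_on Q g"
    and fg: "distributes_over Q f g" and gf: "distributes_over Q g f"
  shows "quandle_on Q (qmult f g)"
  unfolding quandle_on_iff
proof (intro conjI ballI)
  note closed = quandle_on_closed[OF f] quandle_on_closed[OF g]
  show "op_closed_on Q (qmult f g)"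
    using closed by (rule qmult_closed)
  show "qmult f g a a = a" if "a \<in> Q" for a
    using that quandle_on_idem[OF f] quandle_on_idem[OF g] by (simp add: qmult_def)
  show "\<exists>!c. c \<in> Q \<and> qmult f g c b = a" if "a \<in> Q" "b \<in> Q" for a b
  proof (rule ex1I[of _ "rdiv Q f (rdiv Q g a b) b"])
    show "rdiv Q f (rdiv Q g a b) b \<in> Q \<and> qmult f g (rdiv Q f (rdiv Q g a b) b) b = a"
      using that rdiv_closed[OF f] rdiv_closed[OF g]
      by (simp add: qmult_def op_rdiv_cancel[OF f] op_rdiv_cancel[OF g] op_closed_onD)
    show "c = rdiv Q f (rdiv Q g a b) b" if "c \<in> Q \<and> qmult f g c b = a" for c
      using that \<open>b \<in> Q\<close> closed
      by (auto simp: qmult_def rdiv_op_cancel[OF f] rdiv_op_cancel[OF g] op_closed_onD)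
  qed
  show "distributes_over Q (qmult f g) (qmult f g)"
    using closed quandle_on_self_distributes[OF f] quandle_on_self_distributes[OF g] fg gf
    by (intro distributes_over_qmult qmult_distributes_over)
qed

lemma qmult_list_Nil [simp]: "qmult_list [] = (\<lambda>a b. a)"
  by (simp add: qmult_list_def)

lemma qmult_list_snoc [simp]: "qmult_list (fs @ [f]) = qmult (qmult_list fs) f"
  by (simp add: qmult_list_def)

lemma qmult_list_closed: "\<forall>f\<in>set fs. op_closed_on Q f \<Longrightarrow> op_closed_on Q (qmult_list fs)"
  by (induction fs rule: rev_induct) (auto simp: op_closed_on_def qmult_def)

lemma distributes_over_qmult_list:
  "\<forall>k\<in>set ks. op_closed_on Q k \<and> distributes_over Q h k \<Longrightarrow>
    distributes_over Q h (qmult_list ks)"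
proof (induction ks rule: rev_induct)
  case Nil
  then show ?case by (simp add: distributes_over_def)
next
  case (snoc k ks)
  then show ?case
    by (simp add: distributes_over_qmult qmult_list_closed)
qed

lemma qmult_list_distributes_over:
  "\<forall>f\<in>set fs. op_closed_on Q f \<and> distributes_over Q f k \<Longrightarrow>
    distributes_over Q (qmult_list fs) k"
proof (induction fs rule: rev_induct)
  case Nil
  then show ?case by (simp add: distributes_over_def)
next
  case (snoc f fs)
  then show ?case
    by (simp add: qmult_distributes_over qmult_list_closed)
qed

lemma distributive_quandles_qmult_lists:
  assumes F: "distributive_quandles Q F"
  shows "distributive_quandles Q {qmult_list fs |fs. set fs \<subseteq> F}"
proof -
  have closed: "op_closed_on Q f" if "f \<in> F" for f
    using F that quandle_on_closed by (auto simp: distributive_quandles_def)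
  have distr: "distributes_over Q h k" if "h \<in> F" "k \<in> F" for h k
    using F that by (simp add: distributive_quandles_def)
  have lists_distr: "distributes_over Q (qmult_list fs) (qmult_list ks)"
    if "set fs \<subseteq> F" "set ks \<subseteq> F" for fs ks
    using that closed distr
    by (intro qmult_list_distributes_over)
      (auto simp: subset_eq intro!: distributes_over_qmult_list qmult_list_closed)
  have "quandle_on Q (qmult_list fs)" if "set fs \<subseteq> F" for fs
    using that
  proof (induction fs rule: rev_induct)
    case Nil
    show ?case by (auto simp: quandle_on_def)
  next
    case (snoc f fs)
    then have "f \<in> F" "set fs \<subseteq> F" by auto
    moreover have "f = qmult_list [f]"
      by (simp add: qmult_def [abs_def] qmult_list_def)
    ultimately show ?case
      using F snoc.IH lists_distr[of fs "[f]"] lists_distr[of "[f]" fs]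
      by (auto simp: distributive_quandles_def intro!: quandle_on_qmult)
  qed
  with lists_distr show ?thesis
    by (auto simp: distributive_quandles_def)
qed

subsection \<open>Words and their operations\<close>

lemma star_w_eq_qmult_list: "star_w Q ops w = qmult_list (map (letter_op Q ops) w)"
  by (induction w rule: rev_induct)
    (auto simp: star_w_def qmult_def letter_op_def fun_eq_iff)

lemma star_w_append_apply: "star_w Q ops (u @ v) a b = star_w Q ops v (star_w Q ops u a b) b"
  by (simp add: star_w_def)

lemma star_w_append: "star_w Q ops (u @ v) = qmult (star_w Q ops u) (star_w Q ops v)"
  by (simp add: fun_eq_iff qmult_def star_w_append_apply)

lemma quandle_on_letter_op:
  "quandle_on Q (ops (fst l)) \<Longrightarrow> quandle_on Q (letter_op Q ops l)"
  by (simp add: letter_op_def quandle_on_rdiv)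

lemma distributive_quandles_letter_ops:
  assumes quandles: "\<forall>al\<in>\<Lambda>. quandle_on Q (ops al)"
    and distr: "pairwise_distributive Q \<Lambda> ops"
  shows "distributive_quandles Q (letter_op Q ops ` (\<Lambda> \<times> UNIV))"
proof -
  have "distributes_over Q (letter_op Q ops m) (letter_op Q ops l)"
    if "fst l \<in> \<Lambda>" "fst m \<in> \<Lambda>" for l m
  proof -
    note quandle_l = quandles[rule_format, OF that(1)]
      and quandle_m = quandles[rule_format, OF that(2)]
    have "distributes_over Q (ops (fst m)) (ops (fst l))"
      using distr that by (simp add: pairwise_distributive_def distributes_over_def)
    then show ?thesis
      using quandle_l quandle_m
      by (auto simp: letter_op_def quandle_on_closed rdiv_closed
          intro!: distributes_over_rdiv rdiv_distributes_over)
  qed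
  then show ?thesis
    using quandles by (auto simp: distributive_quandles_def intro!: quandle_on_letter_op)
qed

lemma star_w_closed:
  "\<forall>al\<in>\<Lambda>. quandle_on Q (ops al) \<Longrightarrow> set (map fst w) \<subseteq> \<Lambda> \<Longrightarrow>
    op_closed_on Q (star_w Q ops w)"
  unfolding star_w_eq_qmult_list
  by (rule qmult_list_closed) (auto intro!: quandle_on_closed quandle_on_letter_op)

subsection \<open>Free reduction\<close>

lemma not_reduced_wordE:
  assumes "\<not> reduced_word w"
  obtains u al s v where "w = u @ [(al, \<not> s), (al, s)] @ v"
proof -
  obtain i where i: "Suc i < length w" "fst (w ! i) = fst (w ! Suc i)"
    "snd (w ! i) \<noteq> snd (w ! Suc i)"
    using assms by (auto simp: reduced_word_def)
  obtain al s where "w ! i = (al, \<not> s)" "w ! Suc i = (al, s)"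
    using i(2,3) by (cases "w ! i"; cases "w ! Suc i") auto
  moreover have "w = take i w @ [w ! i, w ! Suc i] @ drop (Suc (Suc i)) w"
    using i(1) by (simp add: Cons_nth_drop_Suc)
  ultimately show thesis
    using that by simp
qed

lemma star_w_cancel_pair:
  assumes "quandle_on Q (ops al)" "a \<in> Q" "b \<in> Q"
  shows "star_w Q ops [(al, \<not> s), (al, s)] a b = a"
  using assms by (cases s) (simp_all add: star_w_def op_rdiv_cancel rdiv_op_cancel)

lemma star_w_reduce:
  assumes quandles: "\<forall>al\<in>\<Lambda>. quandle_on Q (ops al)"
  shows "set (map fst w) \<subseteq> \<Lambda> \<Longrightarrow>
    \<exists>w'\<in>free_group_elems \<Lambda>. \<forall>a\<in>Q. \<forall>b\<in>Q. star_w Q ops w a b = star_w Q ops w' a b"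
proof (induction "length w" arbitrary: w rule: less_induct)
  case less
  show ?case
  proof (cases "reduced_word w")
    case True
    with less.prems show ?thesis
      by (auto simp: free_group_elems_def)
  next
    case False
    then obtain u al s v where w: "w = u @ [(al, \<not> s), (al, s)] @ v"
      by (rule not_reduced_wordE)
    have uv: "set (map fst (u @ v)) \<subseteq> \<Lambda>" and al: "al \<in> \<Lambda>"
      using less.prems w by auto
    have cancel: "star_w Q ops w a b = star_w Q ops (u @ v) a b" if "a \<in> Q" "b \<in> Q" for a b
    proof -
      have "star_w Q ops u a b \<in> Q"
        using star_w_closed[OF quandles] uv that by (auto dest: op_closed_onD)
      with quandles al that(2)
      have "star_w Q ops [(al, \<not> s), (al, s)] (star_w Q ops u a b) b = star_w Q ops u a b"
        by (intro star_w_cancel_pair) auto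
      then show ?thesis
        unfolding w star_w_append_apply[where u = u]
          star_w_append_apply[where u = "[(al, \<not> s), (al, s)]"]
        by simp
    qed
    from less.hyps[of "u @ v"] uv w obtain w' where "w' \<in> free_group_elems \<Lambda>"
      and "\<forall>a\<in>Q. \<forall>b\<in>Q. star_w Q ops (u @ v) a b = star_w Q ops w' a b"
      by auto
    with cancel show ?thesis
      by auto
  qed
qed

theorem theorem4p12:
  fixes Q :: "'a set" and \<Lambda> :: "'l set" and ops :: "'l \<Rightarrow> 'a \<Rightarrow> 'a \<Rightarrow> 'a"
  assumes quandles: "\<forall>al\<in>\<Lambda>. quandle_on Q (ops al)"
    and distr: "pairwise_distributive Q \<Lambda> ops"
  shows "(\<forall>w\<in>free_group_elems \<Lambda>. quandle_on Q (star_w Q ops w)) \<and>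
         (\<forall>w1\<in>free_group_elems \<Lambda>. \<forall>w2\<in>free_group_elems \<Lambda>.
            \<exists>w3\<in>free_group_elems \<Lambda>. \<forall>a\<in>Q. \<forall>b\<in>Q.
              qmult (star_w Q ops w1) (star_w Q ops w2) a b = star_w Q ops w3 a b)"
proof (intro conjI ballI)
  fix w assume "w \<in> free_group_elems \<Lambda>"
  then have "star_w Q ops w \<in> {qmult_list fs |fs. set fs \<subseteq> letter_op Q ops ` (\<Lambda> \<times> UNIV)}"
    unfolding star_w_eq_qmult_list by (force simp: free_group_elems_def)
  with distributive_quandles_qmult_lists[OF distributive_quandles_letter_ops[OF quandles distr]]
  show "quandle_on Q (star_w Q ops w)"
    by (simp add: distributive_quandles_def)
next
  fix w1 w2 assume "w1 \<in> free_group_elems \<Lambda>" "w2 \<in> free_group_elems \<Lambda>"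
  then have "set (map fst (w1 @ w2)) \<subseteq> \<Lambda>"
    by (auto simp: free_group_elems_def)
  then show "\<exists>w3\<in>free_group_elems \<Lambda>. \<forall>a\<in>Q. \<forall>b\<in>Q.
              qmult (star_w Q ops w1) (star_w Q ops w2) a b = star_w Q ops w3 a b"
    unfolding star_w_append[symmetric] by (rule star_w_reduce[OF quandles])
qed

end
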